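(* Let $R$ be a commutative multiplicative hyperring with identity $1$ having the zero absorbing property, let $\alpha$ be a good endomorphism of $R$, and let $A$ be a hyperideal of $R$. Then: (1) if $\alpha(1)=1$, then $\sqrt[\alpha]{A}=R$ if and only if $A=R$; (2) if $A$ is $\alpha$-prime, then $\sqrt[\alpha]{A^n}=\sqrt[\alpha]{A}$ for all $n\in\mathbb N$.
   Context: A multiplicative hyperring is an abelian group $(R,+)$ with a hyperoperation $\circ:R\times R\to \mathcal P^*(R)$ (nonempty subsets) such that $a\circ(b\circ c)=(a\circ b)\circ c$, $a\circ(b+c)\subseteq a\circ b+a\circ c$, $(b+c)\circ a\subseteq b\circ a+c\circ a$, and $a\circ(-b)=(-a)\circ b=-(a\circ b)$. Products of subsets are unions of elementwise products; for an element or subset $X$, $X^n=X\circ\cdots\circ X$ ($n$ factors). Commutative means $a\circ b=b\circ a$. An identity $1$ satisfies $a\in1\circ a$ for all $a$. $R$ has the zero absorbing property if $0\circ r=r\circ0=\{0\}$ for all $r$. A hyperideal is a nonempty $I$ closed under subtraction with $r\circ x\subseteq I$ for $r\in R$, $x\in I$. Standing assumption: all hyperideals are $\mathbf C$-hyperideals, i.e. for every finite product $A=r_1\circ\cdots\circ r_n$, $A\cap I\ne\emptyset$ implies $A\subseteq I$. A good endomorphism $\alpha$ satisfies $\alpha(x+y)=\alpha(x)+\alpha(y)$ and $\alpha(x\circ y)=\alpha(x)\circ\alpha(y)$; it is applied to sets elementwise. The $\alpha$-radical is $\sqrt[\alpha]{J}=\{r\in R:\alpha(r^n)\subseteq J\text{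 for some }n\in\mathbb N\}$. A hyperideal $I$ is $\alpha$-prime if for all $x,y$, $x\circ y\subseteq I$ implies $x\in I$ or $\alpha(y)\in I$. *)

theory Defs
  imports Main
begin

text \<open>The additive group (R,+) is the ambient type 'a of class ab_group_add (so R = UNIV);
  the hyperoperation is a function m :: 'a => 'a => 'a set.\<close>

definition setmult :: "('a \<Rightarrow> 'a \<Rightarrow> 'a set) \<Rightarrow> 'a set \<Rightarrow> 'a set \<Rightarrow> 'a set" where
  "setmult m X Y = (\<Union>x\<in>X. \<Union>y\<in>Y. m x y)"

definition setplus :: "'a::ab_group_add set \<Rightarrow> 'a set \<Rightarrow> 'a set" where
  "setplus X Y = {x + y | x y. x \<in> X \<and> y \<in> Y}"

definition mult_hyperring :: "('a::ab_group_add \<Rightarrow> 'a \<Rightarrow> 'a set) \<Rightarrow> bool" where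
  "mult_hyperring m \<longleftrightarrow>
     (\<forall>a b. m a b \<noteq> {}) \<and>
     (\<forall>a b c. setmult m {a} (m b c) = setmult m (m a b) {c}) \<and>
     (\<forall>a b c. m a (b + c) \<subseteq> setplus (m a b) (m a c)) \<and>
     (\<forall>a b c. m (b + c) a \<subseteq> setplus (m b a) (m c a)) \<and>
     (\<forall>a b. m a (- b) = uminus ` (m a b) \<and> m (- a) b = uminus ` (m a b))"

definition hcomm :: "('a \<Rightarrow> 'a \<Rightarrow> 'a set) \<Rightarrow> bool" where
  "hcomm m \<longleftrightarrow> (\<forall>a b. m a b = m b a)"

definition hidentity :: "('a \<Rightarrow> 'a \<Rightarrow> 'a set) \<Rightarrow> 'a \<Rightarrow> bool" where
  "hidentity m one \<longleftrightarrow> (\<forall>a. a \<in> m one a)"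

definition zero_absorbing :: "('a::zero \<Rightarrow> 'a \<Rightarrow> 'a set) \<Rightarrow> bool" where
  "zero_absorbing m \<longleftrightarrow> (\<forall>r. m 0 r = {0} \<and> m r 0 = {0})"

definition hprod :: "('a \<Rightarrow> 'a \<Rightarrow> 'a set) \<Rightarrow> 'a list \<Rightarrow> 'a set" where
  "hprod m rs = foldl (\<lambda>X y. setmult m X {y}) {hd rs} (tl rs)"

text \<open>X^n = X o ... o X (n factors), meaningful for n >= 1; value at n = 0 is an unused convention.\<close>
primrec hpow :: "('a \<Rightarrow> 'a \<Rightarrow> 'a set) \<Rightarrow> 'a set \<Rightarrow> nat \<Rightarrow> 'a set" where
  "hpow m X 0 = {}"
| "hpow m X (Suc n) = (if n = 0 then X else setmult m (hpow m X n) X)"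

definition hyperideal :: "('a::ab_group_add \<Rightarrow> 'a \<Rightarrow> 'a set) \<Rightarrow> 'a set \<Rightarrow> bool" where
  "hyperideal m I \<longleftrightarrow> I \<noteq> {} \<and> (\<forall>x\<in>I. \<forall>y\<in>I. x - y \<in> I) \<and> (\<forall>r. \<forall>x\<in>I. m r x \<subseteq> I)"

definition C_hyperideal :: "('a::ab_group_add \<Rightarrow> 'a \<Rightarrow> 'a set) \<Rightarrow> 'a set \<Rightarrow> bool" where
  "C_hyperideal m I \<longleftrightarrow> hyperideal m I \<and>
     (\<forall>rs. rs \<noteq> [] \<longrightarrow> hprod m rs \<inter> I \<noteq> {} \<longrightarrow> hprod m rs \<subseteq> I)"

definition good_endo :: "('a::ab_group_add \<Rightarrow> 'a \<Rightarrow> 'a set) \<Rightarrow> ('a \<Rightarrow> 'a) \<Rightarrow> bool" where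
  "good_endo m \<alpha> \<longleftrightarrow> (\<forall>x y. \<alpha> (x + y) = \<alpha> x + \<alpha> y) \<and> (\<forall>x y. \<alpha> ` (m x y) = m (\<alpha> x) (\<alpha> y))"

definition alpha_rad :: "('a \<Rightarrow> 'a \<Rightarrow> 'a set) \<Rightarrow> ('a \<Rightarrow> 'a) \<Rightarrow> 'a set \<Rightarrow> 'a set" where
  "alpha_rad m \<alpha> J = {r. \<exists>n\<ge>1. \<alpha> ` (hpow m {r} n) \<subseteq> J}"

definition alpha_prime :: "('a::ab_group_add \<Rightarrow> 'a \<Rightarrow> 'a set) \<Rightarrow> ('a \<Rightarrow> 'a) \<Rightarrow> 'a set \<Rightarrow> bool" where
  "alpha_prime m \<alpha> I \<longleftrightarrow> hyperideal m I \<and> (\<forall>x y. m x y \<subseteq> I \<longrightarrow> x \<in> I \<or> \<alpha> y \<in> I)"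

end

theory Submission
  imports Defs
begin

text \<open>For (1): if \<open>\<alpha>(1) = 1\<close> then \<open>1 \<in> \<alpha>(1\<^sup>n)\<close>, so \<open>1 \<in> \<surd>\<^sup>\<alpha>A\<close> forces \<open>1 \<in> A\<close>,
  and then \<open>r \<in> 1 \<circ> r = r \<circ> 1 \<subseteq> A\<close> for every \<open>r\<close>.
  For (2): \<open>A\<^sup>n \<subseteq> A\<close> gives one inclusion; conversely, if \<open>\<alpha>(r\<^sup>k) \<subseteq> A\<close> then
  \<open>\<alpha>(r\<^sup>k\<^sup>n) = \<alpha>(r\<^sup>k)\<^sup>n \<subseteq> A\<^sup>n\<close>, by associativity of the hyperoperation and multiplicativity
  of \<open>\<alpha>\<close>. Neither part uses that \<open>A\<close> is \<open>\<alpha>\<close>-prime, nor the zero absorbing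
  property, nor that hyperideals are \<open>C\<close>-hyperideals.\<close>

lemma setmult_mono: "X \<subseteq> X' \<Longrightarrow> Y \<subseteq> Y' \<Longrightarrow> setmult m X Y \<subseteq> setmult m X' Y'"
  unfolding setmult_def by blast

lemma mult_hyperring_assoc:
  "mult_hyperring m \<Longrightarrow> setmult m {a} (m b c) = setmult m (m a b) {c}"
  by (simp add: mult_hyperring_def)

lemma setmult_assoc:
  assumes "mult_hyperring m"
  shows "setmult m X (setmult m Y Z) = setmult m (setmult m X Y) Z"
proof -
  have "setmult m X (setmult m Y Z) = (\<Union>x\<in>X. \<Union>y\<in>Y. \<Union>z\<in>Z. setmult m {x} (m y z))"
    unfolding setmult_def by blast
  also have "\<dots> = (\<Union>x\<in>X. \<Union>y\<in>Y. \<Union>z\<in>Z. setmult m (m x y) {z})"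
    by (simp only: mult_hyperring_assoc[OF assms])
  also have "\<dots> = setmult m (setmult m X Y) Z"
    unfolding setmult_def by blast
  finally show ?thesis .
qed

lemma image_setmult:
  assumes "good_endo m \<alpha>"
  shows "\<alpha> ` setmult m X Y = setmult m (\<alpha> ` X) (\<alpha> ` Y)"
proof -
  have "\<alpha> ` m x y = m (\<alpha> x) (\<alpha> y)" for x y
    using assms unfolding good_endo_def by blast
  then show ?thesis
    unfolding setmult_def image_UN by simp
qed

lemma setmult_subset_hyperideal:
  "hyperideal m A \<Longrightarrow> setmult m X A \<subseteq> A"
  unfolding setmult_def hyperideal_def by blast

lemma hpow_add:
  assumes "mult_hyperring m" "1 \<le> a" "1 \<le> b"
  shows "hpow m X (a + b) = setmult m (hpow m X a) (hpow m X b)"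
  using assms(3)
proof (induction b rule: nat_induct_at_least)
  case base
  then show ?case
    using assms(2) by simp
next
  case (Suc b)
  then have "hpow m X (a + Suc b) = setmult m (setmult m (hpow m X a) (hpow m X b)) X"
    using assms(2) by simp
  also have "\<dots> = setmult m (hpow m X a) (hpow m X (Suc b))"
    using Suc.hyps by (simp add: setmult_assoc[OF assms(1)])
  finally show ?case .
qed

lemma hpow_mult:
  assumes "mult_hyperring m" "1 \<le> k" "1 \<le> n"
  shows "hpow m X (k * n) = hpow m (hpow m X k) n"
  using assms(3)
proof (induction n rule: nat_induct_at_least)
  case base
  then show ?case by simp
next
  case (Suc n)
  have "hpow m X (k * Suc n) = setmult m (hpow m X (k * n)) (hpow m X k)"
    using hpow_add[OF assms(1), of "k * n" k X] Suc.hyps assms(2) by (simp add: add.commute)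
  also have "\<dots> = hpow m (hpow m X k) (Suc n)"
    using Suc by simp
  finally show ?case .
qed

lemma hpow_mono: "X \<subseteq> Y \<Longrightarrow> hpow m X n \<subseteq> hpow m Y n"
  by (induction n) (simp_all add: setmult_mono)

lemma image_hpow: "good_endo m \<alpha> \<Longrightarrow> \<alpha> ` hpow m X n = hpow m (\<alpha> ` X) n"
  by (induction n) (simp_all add: image_setmult)

lemma hpow_subset_hyperideal: "hyperideal m A \<Longrightarrow> 1 \<le> n \<Longrightarrow> hpow m A n \<subseteq> A"
  by (induction n) (auto simp: setmult_subset_hyperideal)

lemma identity_in_hpow:
  assumes "hidentity m one" "1 \<le> n"
  shows "one \<in> hpow m {one} n"
  using assms(2)
proof (induction n rule: nat_induct_at_least)
  case base
  then show ?case by simp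
next
  case (Suc n)
  moreover have "one \<in> m one one"
    using assms(1) unfolding hidentity_def by blast
  ultimately show ?case
    by (auto simp: setmult_def)
qed

lemma hyperideal_eq_UNIV_if_identity:
  assumes "hcomm m" "hidentity m one" "hyperideal m A" "one \<in> A"
  shows "A = UNIV"
proof -
  have "r \<in> A" for r
  proof -
    have "r \<in> m one r"
      using assms(2) unfolding hidentity_def by blast
    also have "\<dots> = m r one"
      using assms(1) unfolding hcomm_def by blast
    also have "\<dots> \<subseteq> A"
      using assms(3,4) unfolding hyperideal_def by blast
    finally show ?thesis .
  qed
  then show ?thesis by blast
qed

lemma alpha_rad_eq_UNIV_iff:
  assumes "hcomm m" "hidentity m one" "hyperideal m A" "\<alpha> one = one"
  shows "alpha_rad m \<alpha> A = UNIV \<longleftrightarrow> A = UNIV"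
proof
  assume "alpha_rad m \<alpha> A = UNIV"
  then obtain n where "1 \<le> n" "\<alpha> ` hpow m {one} n \<subseteq> A"
    unfolding alpha_rad_def by blast
  then have "one \<in> A"
    using identity_in_hpow[OF assms(2)] assms(4) by force
  then show "A = UNIV"
    using hyperideal_eq_UNIV_if_identity assms(1-3) by blast
next
  assume "A = UNIV"
  then show "alpha_rad m \<alpha> A = UNIV"
    unfolding alpha_rad_def by auto
qed

lemma alpha_rad_hpow:
  assumes "mult_hyperring m" "good_endo m \<alpha>" "hyperideal m A" "1 \<le> n"
  shows "alpha_rad m \<alpha> (hpow m A n) = alpha_rad m \<alpha> A"
proof
  show "alpha_rad m \<alpha> (hpow m A n) \<subseteq> alpha_rad m \<alpha> A"
    using hpow_subset_hyperideal[OF assms(3,4)] unfolding alpha_rad_def by blast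
next
  show "alpha_rad m \<alpha> A \<subseteq> alpha_rad m \<alpha> (hpow m A n)"
  proof
    fix r
    assume "r \<in> alpha_rad m \<alpha> A"
    then obtain k where k: "1 \<le> k" "\<alpha> ` hpow m {r} k \<subseteq> A"
      unfolding alpha_rad_def by blast
    have "\<alpha> ` hpow m {r} (k * n) = hpow m (\<alpha> ` hpow m {r} k) n"
      by (simp add: hpow_mult[OF assms(1) k(1) assms(4)] image_hpow[OF assms(2)])
    also have "\<dots> \<subseteq> hpow m A n"
      using k(2) by (rule hpow_mono)
    finally have "\<alpha> ` hpow m {r} (k * n) \<subseteq> hpow m A n" .
    moreover have "1 \<le> k * n"
      using k(1) assms(4) by simp
    ultimately show "r \<in> alpha_rad m \<alpha> (hpow m A n)"
      unfolding alpha_rad_def by blast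
  qed
qed

theorem mainTheorem14:
  fixes m :: "'a::ab_group_add \<Rightarrow> 'a \<Rightarrow> 'a set"
    and one :: 'a and \<alpha> :: "'a \<Rightarrow> 'a" and A :: "'a set"
  assumes "mult_hyperring m"
    and "hcomm m"
    and "hidentity m one"
    and "zero_absorbing m"
    and "\<forall>I. hyperideal m I \<longrightarrow> C_hyperideal m I"
    and "good_endo m \<alpha>"
    and "hyperideal m A"
  shows "(\<alpha> one = one \<longrightarrow> (alpha_rad m \<alpha> A = UNIV \<longleftrightarrow> A = UNIV))
       \<and> (alpha_prime m \<alpha> A \<longrightarrow> (\<forall>n\<ge>1. alpha_rad m \<alpha> (hpow m A n) = alpha_rad m \<alpha> A))"
  using alpha_rad_eq_UNIV_iff[OF assms(2,3,7)] alpha_rad_hpow[OF assms(1,6,7)] by blast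

end
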